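(* Let $N>2$ be an odd positive integer, $K$ a positive integer, and $0<Z_x\le N$, $0<Z_y\le K$ integers. Let $f:\mathbb{Z}_N\to\mathbb{Z}_K$ be such that for all integers $a,b$ with $-Z_x<a<Z_x$, $a\ne0$, $-Z_y<b<Z_y$, the equation $f(x+a)-f(x)=b$ (with $x+a$ computed in $\mathbb{Z}_N$ and the equation in $\mathbb{Z}_K$) has at most one solution $x\in\mathbb{Z}_N$. For $0\le k<N$ let $\mathbf{a}_k=(a_k(0),\dots,a_k(K-1))$ with $a_k(t)=\omega_K^{tf(k)}$. Let $\mathbf{h}_0,\dots,\mathbf{h}_{N-1}$ be unimodular complex sequences of length $N$ such that for all $0\le i\ne j<N$ and all $0\le v<N$, $$\Big|\sum_{n=0}^{N-1}h_i(n)h_j^*(n)\Big|\le 1,\qquad \Big|\sum_{n=0}^{N-1}h_i(n)h_j^*(n)\omega_N^{nv}\Big|<N.$$ For $0\le i<N$ define $\mathbf{s}_i$ of length $NK$ by $s_i(tN+k)=h_i(k)a_k(t)$ for $0\le t<K$, $0\le k<N$, and let $\mathcal{S}=\{\mathbf{s}_0,\dots,\mathbf{s}_{N-1}\}$. Then $\mathcal{S}$ is a polyphase periodic $(N,NK,\Pi,K)$-LAZ sequence set with $\Pi=(-Z_x,Z_x)\times(-Z_y,Z_y)$; that is, for all integers $(\tau,v)\in\Pi$: $|AF_{\mathbf{s}_i}(\tau,v)|\le K$ for every $i$ whenever $(\tau,v)\neq(0,0)$, and $|AF_{\mathbf{s}_i,\mathbf{s}_j}(\tau,v)|\le K$ for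 all $i\neq j$.
   Context: $\omega_L=e^{2\pi\sqrt{-1}/L}$, $z^*$ is complex conjugation, and a sequence is unimodular if all entries have modulus 1. For sequences $\mathbf{a},\mathbf{b}$ of length $L$, the periodic cross-ambiguity function is $AF_{\mathbf{a},\mathbf{b}}(\tau,v)=\sum_{t=0}^{L-1}a(t)b^*(\langle t+\tau\rangle_L)\omega_L^{vt}$ ($\langle\cdot\rangle_L$ = reduction mod $L$), and $AF_{\mathbf{a}}=AF_{\mathbf{a},\mathbf{a}}$. A set of $M$ sequences of length $L$ is an $(M,L,\Pi,\theta)$-LAZ periodic sequence set if the maximum of $|AF_{\mathbf{a}}(\tau,v)|$ over sequences $\mathbf{a}$ in the set and $(0,0)\ne(\tau,v)\in\Pi$, and of $|AF_{\mathbf{a},\mathbf{b}}(\tau,v)|$ over distinct $\mathbf{a},\mathbf{b}$ in the set and $(\tau,v)\in\Pi$, is $\theta$ (here: at most $\theta$). *)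

theory Defs
  imports "HOL-Analysis.Analysis"
begin

definition omega_pow :: "nat \<Rightarrow> int \<Rightarrow> complex" where
  "omega_pow L e = cis (2 * pi * of_int e / of_nat L)"

definition modL :: "nat \<Rightarrow> int \<Rightarrow> nat" where
  "modL L x = nat (x mod int L)"

definition AF :: "nat \<Rightarrow> (nat \<Rightarrow> complex) \<Rightarrow> (nat \<Rightarrow> complex) \<Rightarrow> int \<Rightarrow> int \<Rightarrow> complex" where
  "AF L a b \<tau> v = (\<Sum>t<L. a t * cnj (b (modL L (int t + \<tau>))) * omega_pow L (v * int t))"

definition seqA :: "nat \<Rightarrow> (nat \<Rightarrow> nat) \<Rightarrow> nat \<Rightarrow> nat \<Rightarrow> complex" where
  "seqA K f k t = omega_pow K (int t * int (f k))"

definition seqS :: "nat \<Rightarrow> nat \<Rightarrow> (nat \<Rightarrow> nat) \<Rightarrow> (nat \<Rightarrow> nat \<Rightarrow> complex) \<Rightarrow> nat \<Rightarrow> nat \<Rightarrow> complex" where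
  "seqS N K f h i m = h i (m mod N) * seqA K f (m mod N) (m div N)"

end

theory Submission
  imports Defs
begin

(* Write the index of s_i as k + t N with k < N, t < K. In AF(s_i, s_j)(tau, v) the block index t
   only enters through the character omega_K^(t (f(k) - f(k + tau) + v)), so summing over t leaves
   K times a sum of unimodular terms over the solutions k of f(k + tau) - f(k) = v in Z_K.
   Away from the origin there is at most one solution (none when tau = 0, as 0 < |v| < K), which
   gives the bound K; at the origin the sum is K times the correlation of h_i and h_j. *)

lemma omega_pow_add: "omega_pow L (a + b) = omega_pow L a * omega_pow L b"
  by (simp add: omega_pow_def cis_mult add_divide_distrib distrib_left)

lemma omega_pow_multiple: "L > 0 \<Longrightarrow> omega_pow L (int L * z) = 1"
  using cis_multiple_2pi[of "real_of_int z"] by (simp add: omega_pow_def mult.assoc)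

lemma cnj_omega_pow: "cnj (omega_pow L a) = omega_pow L (- a)"
  by (simp add: omega_pow_def cis_cnj)

lemma norm_omega_pow: "cmod (omega_pow L a) = 1"
  by (simp add: omega_pow_def)

lemma omega_pow_mult_length: "N > 0 \<Longrightarrow> omega_pow (N * K) (int N * a) = omega_pow K a"
  by (simp add: omega_pow_def algebra_simps)

lemma omega_pow_mod_mult: "L > 0 \<Longrightarrow> omega_pow L (a mod int L * b) = omega_pow L (a * b)"
proof -
  assume L: "L > 0"
  have "a * b = a mod int L * b + int L * (a div int L * b)"
    by (metis distrib_right mult.assoc mult.commute mult_div_mod_eq add.commute)
  then show ?thesis by (simp add: omega_pow_add omega_pow_multiple[OF L])
qed

lemma omega_pow_of_nat_mult: "omega_pow L (int t * e) = omega_pow L e ^ t"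
proof (induction t)
  case 0
  then show ?case by (simp add: omega_pow_def)
next
  case (Suc t)
  have "int (Suc t) * e = e + int t * e" by (simp add: algebra_simps)
  then show ?case using Suc by (simp add: omega_pow_add)
qed

lemma omega_pow_eq_1_iff: "L > 0 \<Longrightarrow> omega_pow L e = 1 \<longleftrightarrow> int L dvd e"
proof
  assume L: "L > 0" and e: "omega_pow L e = 1"
  then have "cos (2 * pi * of_int e / of_nat L) = 1"
    unfolding omega_pow_def by (metis cis.sel(1) one_complex.sel(1))
  then obtain n :: int where "2 * pi * of_int e / of_nat L = real_of_int n * 2 * pi"
    using cos_one_2pi_int by blast
  then have "real_of_int e = real_of_int (n * int L)" using L by (simp add: field_simps)
  then show "int L dvd e" by (metis dvd_triv_right of_int_eq_iff)
qed (auto simp: omega_pow_multiple)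

lemma sum_omega_pow:
  assumes K: "K > 0"
  shows "(\<Sum>t<K. omega_pow K (int t * e)) = (if int K dvd e then of_nat K else 0)"
proof (cases "int K dvd e")
  case True
  then have "omega_pow K e = 1" using omega_pow_eq_1_iff[OF K] by blast
  then show ?thesis using True by (simp add: omega_pow_of_nat_mult)
next
  case False
  then have "omega_pow K e \<noteq> 1" using omega_pow_eq_1_iff[OF K] by blast
  moreover have "omega_pow K e ^ K = 1"
    using omega_pow_of_nat_mult[of K K e] omega_pow_multiple[OF K, of e] by simp
  ultimately show ?thesis using False by (simp add: omega_pow_of_nat_mult sum_gp_strict)
qed

lemma modL_less: "L > 0 \<Longrightarrow> modL L x < L"
  unfolding modL_def by (simp add: nat_less_iff)

lemma modL_mult_mod: "N * K > 0 \<Longrightarrow> modL (N * K) x mod N = modL N x"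
proof -
  assume "N * K > 0"
  then have "nat (x mod int (N * K)) mod nat (int N) = nat (x mod int (N * K) mod int N)"
    by (simp add: nat_mod_distrib)
  then show ?thesis unfolding modL_def by (simp add: mod_mod_cancel)
qed

lemma modL_mult_div: "N * K > 0 \<Longrightarrow> modL (N * K) x div N = nat (x div int N mod int K)"
proof -
  assume NK: "N * K > 0"
  then have N: "N > 0" by simp
  have "x mod int (N * K) = int N * (x div int N mod int K) + x mod int N"
    using zmod_zmult2_eq[of "int K" x "int N"] by simp
  then have "x mod int (N * K) div int N = x div int N mod int K"
    using N by (simp add: div_add1_eq)
  moreover have "nat (x mod int (N * K)) div nat (int N) = nat (x mod int (N * K) div int N)"
    using NK by (simp add: nat_div_distrib)
  ultimately show ?thesis unfolding modL_def by simp
qed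

lemma seqS_index: "k < N \<Longrightarrow> seqS N K f h i (k + t * N) = h i k * omega_pow K (int t * int (f k))"
  by (simp add: seqS_def seqA_def)

lemma seqS_shifted_index:
  assumes N: "N > 0" and K: "K > 0"
  shows "seqS N K f h j (modL (N * K) (int (k + t * N) + \<tau>))
    = h j (modL N (int k + \<tau>))
      * omega_pow K ((int t + (int k + \<tau>) div int N) * int (f (modL N (int k + \<tau>))))"
proof -
  have NK: "N * K > 0" using N K by simp
  have x: "int (k + t * N) + \<tau> = (int k + \<tau>) + int t * int N" by simp
  have "(int k + \<tau> + int t * int N) div int N = int t + (int k + \<tau>) div int N"
    using N by simp
  moreover have "modL N (int k + \<tau> + int t * int N) = modL N (int k + \<tau>)"
    unfolding modL_def by simp
  ultimately show ?thesis
    unfolding seqS_def seqA_def x modL_mult_mod[OF NK] modL_mult_div[OF NK]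
    using K by (simp add: omega_pow_mod_mult)
qed

definition diff_solutions :: "nat \<Rightarrow> nat \<Rightarrow> (nat \<Rightarrow> nat) \<Rightarrow> int \<Rightarrow> int \<Rightarrow> nat set" where
  "diff_solutions N K f a b =
     {x \<in> {0..<N}. (int (f (modL N (int x + a))) - int (f x)) mod int K = b mod int K}"

definition AF_coeff ::
    "nat \<Rightarrow> nat \<Rightarrow> (nat \<Rightarrow> nat) \<Rightarrow> (nat \<Rightarrow> nat \<Rightarrow> complex) \<Rightarrow> nat \<Rightarrow> nat \<Rightarrow> int \<Rightarrow> int \<Rightarrow> nat \<Rightarrow> complex"
  where
  "AF_coeff N K f h i j \<tau> v k = h i k * cnj (h j (modL N (int k + \<tau>)))
     * omega_pow K (- ((int k + \<tau>) div int N * int (f (modL N (int k + \<tau>)))))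
     * omega_pow (N * K) (v * int k)"

lemma AF_seqS_summand:
  assumes N: "N > 0" and K: "K > 0" and k: "k < N"
  shows "seqS N K f h i (k + t * N) * cnj (seqS N K f h j (modL (N * K) (int (k + t * N) + \<tau>)))
           * omega_pow (N * K) (v * int (k + t * N))
       = AF_coeff N K f h i j \<tau> v k
           * omega_pow K (int t * (int (f k) - int (f (modL N (int k + \<tau>))) + v))"
proof -
  define kp where "kp = modL N (int k + \<tau>)"
  define c where "c = (int k + \<tau>) div int N"
  have "v * int (k + t * N) = v * int k + int N * (v * int t)" by (simp add: algebra_simps)
  then have V: "omega_pow (N * K) (v * int (k + t * N))
      = omega_pow (N * K) (v * int k) * omega_pow K (v * int t)"
    by (simp add: omega_pow_add omega_pow_mult_length[OF N])
  have "int t * int (f k) + - ((int t + c) * int (f kp)) + v * int t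
      = - (c * int (f kp)) + int t * (int (f k) - int (f kp) + v)"
    by (simp add: algebra_simps)
  then have E: "omega_pow K (int t * int (f k)) * omega_pow K (- ((int t + c) * int (f kp)))
      * omega_pow K (v * int t)
      = omega_pow K (- (c * int (f kp))) * omega_pow K (int t * (int (f k) - int (f kp) + v))"
    by (metis omega_pow_add)
  show ?thesis
    unfolding seqS_index[OF k] seqS_shifted_index[OF N K] V AF_coeff_def
      kp_def[symmetric] c_def[symmetric]
    by (simp add: cnj_omega_pow mult_ac E[symmetric])
qed

lemma AF_seqS_eq:
  assumes N: "N > 0" and K: "K > 0"
  shows "AF (N * K) (seqS N K f h i) (seqS N K f h j) \<tau> v
    = of_nat K * (\<Sum>k\<in>diff_solutions N K f \<tau> v. AF_coeff N K f h i j \<tau> v k)"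
proof -
  define T where "T m = seqS N K f h i m * cnj (seqS N K f h j (modL (N * K) (int m + \<tau>)))
    * omega_pow (N * K) (v * int m)" for m
  define e where "e k = int (f k) - int (f (modL N (int k + \<tau>))) + v" for k
  have solution_iff: "int K dvd e k \<longleftrightarrow> k \<in> diff_solutions N K f \<tau> v" if "k < N" for k
  proof -
    have "- e k = int (f (modL N (int k + \<tau>))) - int (f k) - v" by (simp add: e_def)
    then have "int K dvd e k \<longleftrightarrow> int K dvd (int (f (modL N (int k + \<tau>))) - int (f k) - v)"
      by (metis dvd_minus_iff)
    then show ?thesis using that by (simp add: diff_solutions_def mod_eq_dvd_iff)
  qed
  have "AF (N * K) (seqS N K f h i) (seqS N K f h j) \<tau> v = (\<Sum>m<K * N. T m)"
    unfolding AF_def T_def by (simp add: mult.commute)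
  also have "\<dots> = (\<Sum>t<K. \<Sum>k<N. T (k + t * N))"
    by (rule sum_mult_product)
  also have "\<dots> = (\<Sum>t<K. \<Sum>k<N. AF_coeff N K f h i j \<tau> v k * omega_pow K (int t * e k))"
    unfolding T_def e_def using AF_seqS_summand[OF N K] by (intro sum.cong refl) blast
  also have "\<dots> = (\<Sum>k<N. AF_coeff N K f h i j \<tau> v k * (\<Sum>t<K. omega_pow K (int t * e k)))"
    by (subst sum.swap) (simp add: sum_distrib_left)
  also have "\<dots> = (\<Sum>k<N. if k \<in> diff_solutions N K f \<tau> v
      then of_nat K * AF_coeff N K f h i j \<tau> v k else 0)"
    by (intro sum.cong refl) (simp add: sum_omega_pow[OF K] solution_iff)
  also have "\<dots> = of_nat K * (\<Sum>k\<in>diff_solutions N K f \<tau> v. AF_coeff N K f h i j \<tau> v k)"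
    unfolding diff_solutions_def sum_distrib_left lessThan_atLeast0
    by (simp only: sum.inter_filter[OF finite_atLeastLessThan]) (intro sum.cong refl, simp)
  finally show ?thesis .
qed

lemma norm_AF_seqS_le:
  assumes N: "N > 0" and K: "K > 0" and ij: "i < N" "j < N"
    and h_unimod: "\<forall>i<N. \<forall>n<N. cmod (h i n) = 1"
  shows "cmod (AF (N * K) (seqS N K f h i) (seqS N K f h j) \<tau> v)
    \<le> real K * card (diff_solutions N K f \<tau> v)"
proof -
  let ?S = "diff_solutions N K f \<tau> v"
  have "cmod (AF_coeff N K f h i j \<tau> v k) = 1" if "k \<in> ?S" for k
    using that h_unimod ij modL_less[OF N]
    by (simp add: AF_coeff_def diff_solutions_def norm_mult norm_omega_pow)
  then have "cmod (\<Sum>k\<in>?S. AF_coeff N K f h i j \<tau> v k) \<le> real (card ?S)"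
    using norm_sum[of "AF_coeff N K f h i j \<tau> v" ?S] by simp
  then show ?thesis
    unfolding AF_seqS_eq[OF N K] norm_mult by (simp add: mult_left_mono)
qed

lemma diff_solutions_no_shift:
  "\<not> int K dvd v \<Longrightarrow> diff_solutions N K f 0 v = {}"
  by (auto simp: diff_solutions_def modL_def mod_eq_0_iff_dvd)

lemma card_diff_solutions_le_1:
  assumes f_diff: "\<forall>a b. -Zx < a \<and> a < Zx \<and> a \<noteq> 0 \<and> -Zy < b \<and> b < Zy \<longrightarrow>
      card (diff_solutions N K f a b) \<le> 1"
    and window: "-Zx < \<tau>" "\<tau> < Zx" "-Zy < v" "v < Zy" and Zy: "Zy \<le> int K"
    and off_origin: "(\<tau>, v) \<noteq> (0, 0)"
  shows "card (diff_solutions N K f \<tau> v) \<le> 1"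
proof (cases "\<tau> = 0")
  case True
  have "v \<noteq> 0" using True off_origin by simp
  moreover have "\<bar>v\<bar> < int K" using window Zy by linarith
  ultimately have "\<not> int K dvd v" by (auto dest: dvd_imp_le_int)
  with True show ?thesis by (simp add: diff_solutions_no_shift)
next
  case False
  then show ?thesis using f_diff window by blast
qed

lemma AF_seqS_origin:
  assumes N: "N > 0" and K: "K > 0"
  shows "AF (N * K) (seqS N K f h i) (seqS N K f h j) 0 0 = of_nat K * (\<Sum>n<N. h i n * cnj (h j n))"
proof -
  have "diff_solutions N K f 0 0 = {..<N}"
    by (auto simp: diff_solutions_def modL_def)
  moreover have "AF_coeff N K f h i j 0 0 n = h i n * cnj (h j n)" if "n < N" for n
    using that by (simp add: AF_coeff_def modL_def omega_pow_def)
  ultimately show ?thesis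
    unfolding AF_seqS_eq[OF N K] by simp
qed

theorem theorem1:
  fixes N K :: nat and Zx Zy :: int
    and f :: "nat \<Rightarrow> nat" and h :: "nat \<Rightarrow> nat \<Rightarrow> complex"
  assumes N_odd: "odd N" and N_gt: "N > 2" and K_pos: "K > 0"
    and Zx: "0 < Zx" "Zx \<le> int N" and Zy: "0 < Zy" "Zy \<le> int K"
    and f_range: "\<forall>k<N. f k < K"
    and f_diff: "\<forall>a b. -Zx < a \<and> a < Zx \<and> a \<noteq> 0 \<and> -Zy < b \<and> b < Zy \<longrightarrow>
        card {x \<in> {0..<N}. (int (f (modL N (int x + a))) - int (f x)) mod int K = b mod int K} \<le> 1"
    and h_unimod: "\<forall>i<N. \<forall>n<N. cmod (h i n) = 1"
    and h_corr: "\<forall>i<N. \<forall>j<N. i \<noteq> j \<longrightarrow>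
        cmod (\<Sum>n<N. h i n * cnj (h j n)) \<le> 1"
    and h_dopp: "\<forall>i<N. \<forall>j<N. i \<noteq> j \<longrightarrow> (\<forall>v<N.
        cmod (\<Sum>n<N. h i n * cnj (h j n) * omega_pow N (int n * int v)) < real N)"
  shows "\<forall>\<tau> v. -Zx < \<tau> \<and> \<tau> < Zx \<and> -Zy < v \<and> v < Zy \<longrightarrow>
           (\<forall>i<N. (\<tau>, v) \<noteq> (0, 0) \<longrightarrow>
              cmod (AF (N * K) (seqS N K f h i) (seqS N K f h i) \<tau> v) \<le> real K) \<and>
           (\<forall>i<N. \<forall>j<N. i \<noteq> j \<longrightarrow>
              cmod (AF (N * K) (seqS N K f h i) (seqS N K f h j) \<tau> v) \<le> real K)"
proof (intro allI impI conjI)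
  fix \<tau> v :: int
  assume window: "-Zx < \<tau> \<and> \<tau> < Zx \<and> -Zy < v \<and> v < Zy"
  have N: "N > 0" using N_gt by simp
  have AF_le: "cmod (AF (N * K) (seqS N K f h i) (seqS N K f h j) \<tau> v) \<le> real K"
    if "i < N" "j < N" "(\<tau>, v) \<noteq> (0, 0)" for i j
  proof -
    have "cmod (AF (N * K) (seqS N K f h i) (seqS N K f h j) \<tau> v)
        \<le> real K * card (diff_solutions N K f \<tau> v)"
      using norm_AF_seqS_le[OF N K_pos that(1,2) h_unimod] .
    also have "\<dots> \<le> real K"
      using card_diff_solutions_le_1[OF f_diff[folded diff_solutions_def]] window Zy that(3)
      by (simp add: mult_left_le)
    finally show ?thesis .
  qed
  show "cmod (AF (N * K) (seqS N K f h i) (seqS N K f h i) \<tau> v) \<le> real K"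
    if "i < N" "(\<tau>, v) \<noteq> (0, 0)" for i
    using AF_le that by blast
  show "cmod (AF (N * K) (seqS N K f h i) (seqS N K f h j) \<tau> v) \<le> real K"
    if "i < N" "j < N" "i \<noteq> j" for i j
  proof (cases "(\<tau>, v) = (0, 0)")
    case True
    then have "cmod (AF (N * K) (seqS N K f h i) (seqS N K f h j) \<tau> v)
        = real K * cmod (\<Sum>n<N. h i n * cnj (h j n))"
      by (simp add: AF_seqS_origin[OF N K_pos] norm_mult)
    also have "\<dots> \<le> real K"
      using h_corr that by (simp add: mult_left_le)
    finally show ?thesis .
  next
    case False
    then show ?thesis using AF_le that by blast
  qed
qed

end
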